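(* Let $\mathbf{x}$ be a $d$-dimensional random vector that is a mixture of two $\sigma$-sub-gaussian random vectors $\mathbf{x}_1,\mathbf{x}_2$ with overlapping supports and mixture proportion $\alpha\in[0,1]$, i.e. its density is $p(\mathbf{x})=\alpha p_1(\mathbf{x})+(1-\alpha)p_2(\mathbf{x})$. Let $\boldsymbol{v}$ satisfy $\|\boldsymbol{v}\|_2=1$ and suppose the Jensen–Shannon divergence satisfies $\mathrm{JS}(\boldsymbol{v}^\top\mathbf{x}_1\,\|\,\boldsymbol{v}^\top\mathbf{x}_2)\le\beta$. Then the differential entropy $H(\boldsymbol{v}^\top\mathbf{x})$ is at most $\mathcal{O}(\log\sigma+\beta)$. *)

theory Defs
  imports "HOL-Probability.Probability"
begin

text \<open>Lebesgue measure on R^d, points represented as functions nat => real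
  (coordinates 0..d-1; extensional, i.e. undefined outside).\<close>
abbreviation lebesgue_Rd :: "nat \<Rightarrow> (nat \<Rightarrow> real) measure" where
  "lebesgue_Rd d \<equiv> Pi\<^sub>M {..<d} (\<lambda>_. lborel)"

definition inner_Rd :: "nat \<Rightarrow> (nat \<Rightarrow> real) \<Rightarrow> (nat \<Rightarrow> real) \<Rightarrow> real" where
  "inner_Rd d u x = (\<Sum>i<d. u i * x i)"

definition norm_Rd :: "nat \<Rightarrow> (nat \<Rightarrow> real) \<Rightarrow> real" where
  "norm_Rd d u = sqrt (\<Sum>i<d. (u i)\<^sup>2)"

definition is_density_Rd :: "nat \<Rightarrow> ((nat \<Rightarrow> real) \<Rightarrow> real) \<Rightarrow> bool" where
  "is_density_Rd d p \<longleftrightarrow> p \<in> borel_measurable (lebesgue_Rd d) \<and>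
     (\<forall>x\<in>space (lebesgue_Rd d). 0 \<le> p x) \<and>
     integrable (lebesgue_Rd d) p \<and> (\<integral>x. p x \<partial>lebesgue_Rd d) = 1"

definition law_Rd :: "nat \<Rightarrow> ((nat \<Rightarrow> real) \<Rightarrow> real) \<Rightarrow> (nat \<Rightarrow> real) measure" where
  "law_Rd d p = density (lebesgue_Rd d) (\<lambda>x. ennreal (p x))"

definition subgaussian_Rd :: "nat \<Rightarrow> real \<Rightarrow> (nat \<Rightarrow> real) measure \<Rightarrow> bool" where
  "subgaussian_Rd d \<sigma> P \<longleftrightarrow>
     (\<forall>i<d. integrable P (\<lambda>x. x i)) \<and>
     (\<forall>u. norm_Rd d u = 1 \<longrightarrow> (\<forall>l::real.
        integrable P (\<lambda>x. exp (l * (inner_Rd d u x - (\<integral>y. inner_Rd d u y \<partial>P)))) \<and>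
        (\<integral>x. exp (l * (inner_Rd d u x - (\<integral>y. inner_Rd d u y \<partial>P))) \<partial>P)
          \<le> exp (l\<^sup>2 * \<sigma>\<^sup>2 / 2)))"

definition mixture_measure :: "real \<Rightarrow> 'a measure \<Rightarrow> 'a measure \<Rightarrow> 'a measure" where
  "mixture_measure a P Q = measure_of (space P) (sets P)
     (\<lambda>A. ennreal a * emeasure P A + ennreal (1 - a) * emeasure Q A)"

text \<open>Jensen-Shannon divergence (natural logarithm):
  JS(P||Q) = 1/2 KL(P||M) + 1/2 KL(Q||M), M = (P+Q)/2.
  Note: library KL_divergence b M N is KL(N || M).\<close>
definition JS_divergence :: "'a measure \<Rightarrow> 'a measure \<Rightarrow> real" where
  "JS_divergence P Q =
     (let M = mixture_measure (1/2) P Q in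
      KL_divergence (exp 1) M P / 2 + KL_divergence (exp 1) M Q / 2)"

definition diff_entropy :: "'a measure \<Rightarrow> ('a \<Rightarrow> real) \<Rightarrow> real" where
  "diff_entropy M X = prob_space.entropy M (exp 1) lborel X"

end

theory Submission
  imports Defs
begin

(* Let Q, Q1, Q2 be the laws of v^T x, v^T x1, v^T x2 and m1, m2 the means of the latter two.
  Gibbs' inequality bounds the differential entropy of Q by its cross entropy -E_Q ln g against
  any probability density g; take g = (N(m1, sigma^2) + N(m2, sigma^2)) / 2.  Since
  g >= N(mi, sigma^2) / 2, the cross entropy of Qi is at most
  ln 2 + ln (sqrt (2 pi) sigma) + E_Qi (y - mi)^2 / (2 sigma^2), and the sub-gaussian bound on
  the moment generating function at l = 1/sigma and l = -1/sigma gives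
  E_Qi (y - mi)^2 <= 4 e^(1/2) sigma^2.  Cross entropy is affine in Q = alpha Q1 + (1 - alpha) Q2,
  so H(v^T x) <= ln sigma + ln 2 + ln (2 pi) / 2 + 2 e^(1/2). *)

lemma
  fixes D g :: "'a \<Rightarrow> real"
  assumes [measurable]: "D \<in> borel_measurable M" "g \<in> borel_measurable M"
    and D_nonneg: "\<And>x. 0 \<le> D x" and g_nonneg: "\<And>x. 0 \<le> g x"
    and g_subprob: "(\<integral>\<^sup>+x. ennreal (g x) \<partial>M) \<le> 1"
  shows integrable_density_ratio: "integrable (density M D) (\<lambda>x. g x / D x)"
    and integral_density_ratio_le_1: "(\<integral>x. g x / D x \<partial>density M D) \<le> 1"
proof -
  have "(\<integral>\<^sup>+x. ennreal (g x / D x) \<partial>density M D) = (\<integral>\<^sup>+x. ennreal (D x) * ennreal (g x / D x) \<partial>M)"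
    by (rule nn_integral_density) auto
  also have "\<dots> \<le> (\<integral>\<^sup>+x. ennreal (g x) \<partial>M)"
    using D_nonneg g_nonneg by (intro nn_integral_mono) (auto simp: ennreal_mult'[symmetric])
  finally have ratio_le_1: "(\<integral>\<^sup>+x. ennreal (g x / D x) \<partial>density M D) \<le> 1"
    using g_subprob by simp
  have ratio_nonneg: "AE x in density M D. 0 \<le> g x / D x"
    using D_nonneg g_nonneg by simp
  show int_ratio: "integrable (density M D) (\<lambda>x. g x / D x)"
    using ratio_le_1 ratio_nonneg by (intro integrableI_nonneg) (auto intro: le_less_trans)
  show "(\<integral>x. g x / D x \<partial>density M D) \<le> 1"
    using nn_integral_eq_integral[OF int_ratio ratio_nonneg] ratio_le_1 by simp
qed

lemma integral_ln_le_KL_divergence: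
  fixes M N :: "'a measure" and g :: "'a \<Rightarrow> real"
  assumes "sigma_finite_measure M" and "prob_space N"
    and ac: "absolutely_continuous M N" and sets_N: "sets N = sets M"
    and g_measurable[measurable]: "g \<in> borel_measurable M" and g_pos: "\<And>x. 0 < g x"
    and g_subprob: "(\<integral>\<^sup>+x. ennreal (g x) \<partial>M) \<le> 1"
    and int_ln_g: "integrable N (\<lambda>x. ln (g x))"
    and int_entropy_density: "integrable N (entropy_density (exp 1) M N)"
  shows "(\<integral>x. ln (g x) \<partial>N) \<le> KL_divergence (exp 1) M N"
proof -
  interpret M: sigma_finite_measure M by fact
  interpret N: prob_space N by fact
  obtain D where D_measurable[measurable]: "D \<in> borel_measurable M"
    and RN_deriv_eq: "AE x in M. RN_deriv M N x = ennreal (D x)"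
    and D_pos: "AE x in N. 0 < D x" and D_nonneg: "\<And>x. 0 \<le> D x"
    using M.real_RN_deriv[OF N.finite_measure_axioms ac sets_N] by blast
  have N_eq: "N = density M D"
  proof -
    have "N = density M (RN_deriv M N)"
      using M.density_RN_deriv[OF ac sets_N] by simp
    also have "\<dots> = density M D"
      using RN_deriv_eq by (intro density_cong) auto
    finally show ?thesis .
  qed
  have [measurable]: "D \<in> borel_measurable N" "g \<in> borel_measurable N"
    by (simp_all add: measurable_cong_sets[OF sets_N refl])
  have [measurable]: "entropy_density (exp 1) M N \<in> borel_measurable N"
    by (simp add: measurable_cong_sets[OF sets_N refl])
  have entropy_density_eq: "AE x in N. entropy_density (exp 1) M N x = ln (D x)"
    using absolutely_continuous_AE[OF sets_N ac RN_deriv_eq]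
    by eventually_elim (simp add: entropy_density_def log_def D_nonneg)
  have KL_eq: "KL_divergence (exp 1) M N = (\<integral>x. ln (D x) \<partial>N)"
    unfolding KL_divergence_def using entropy_density_eq by (intro integral_cong_AE) auto
  have int_ln_D: "integrable N (\<lambda>x. ln (D x))"
    using int_entropy_density entropy_density_eq by (subst integrable_cong_AE) auto
  have int_ratio: "integrable N (\<lambda>x. g x / D x)"
    and integral_ratio_le_1: "(\<integral>x. g x / D x \<partial>N) \<le> 1"
    using integrable_density_ratio[OF D_measurable g_measurable D_nonneg _ g_subprob]
      integral_density_ratio_le_1[OF D_measurable g_measurable D_nonneg _ g_subprob] g_pos
    by (simp_all add: N_eq less_imp_le)
  have "(\<integral>x. ln (g x) \<partial>N) - KL_divergence (exp 1) M N = (\<integral>x. ln (g x) - ln (D x) \<partial>N)"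
    using int_ln_g int_ln_D KL_eq by simp
  also have "\<dots> \<le> (\<integral>x. g x / D x - 1 \<partial>N)"
  proof (rule integral_mono_AE)
    show "AE x in N. ln (g x) - ln (D x) \<le> g x / D x - 1"
      using D_pos by eventually_elim (metis g_pos ln_divide_pos ln_le_minus_one divide_pos_pos)
  qed (use int_ln_g int_ln_D int_ratio in auto)
  also have "\<dots> \<le> 0"
    using int_ratio integral_ratio_le_1 by (simp add: N.prob_space)
  finally show ?thesis by simp
qed

lemma KL_divergence_nonneg:
  assumes M: "prob_space M" and "prob_space N"
    and ac: "absolutely_continuous M N" and sets_N: "sets N = sets M"
  shows "0 \<le> KL_divergence (exp 1) M N"
proof (cases "integrable N (entropy_density (exp 1) M N)")
  case True
  interpret M: prob_space M by fact
  have "(\<integral>x. ln 1 \<partial>N) \<le> KL_divergence (exp 1) M N"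
    using M.emeasure_space_1
    by (intro integral_ln_le_KL_divergence[OF M.sigma_finite_measure_axioms \<open>prob_space N\<close> ac sets_N]) (auto simp: True)
  then show ?thesis by simp
next
  case False
  \<comment> \<open>the Bochner integral of a non-integrable function is 0\<close>
  then show ?thesis by (simp add: KL_divergence_def not_integrable_integral_eq)
qed

lemma sets_mixture_measure[simp]: "sets (mixture_measure a P Q) = sets P"
  unfolding mixture_measure_def by (simp add: sets.space_closed)

lemma emeasure_mixture_measure:
  assumes sets_Q: "sets Q = sets P" and A: "A \<in> sets P"
  shows "emeasure (mixture_measure a P Q) A = ennreal a * emeasure P A + ennreal (1 - a) * emeasure Q A"
  unfolding mixture_measure_def
proof (rule emeasure_measure_of_sigma[OF sets.sigma_algebra_axioms _ _ A])
  show "positive (sets P) (\<lambda>A. ennreal a * emeasure P A + ennreal (1 - a) * emeasure Q A)"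
    by (simp add: positive_def)
  show "countably_additive (sets P) (\<lambda>A. ennreal a * emeasure P A + ennreal (1 - a) * emeasure Q A)"
  proof (rule countably_additiveI)
    fix A :: "nat \<Rightarrow> _" assume A: "range A \<subseteq> sets P" "disjoint_family A"
    then have "range A \<subseteq> sets Q" using sets_Q by simp
    then show "(\<Sum>i. ennreal a * emeasure P (A i) + ennreal (1 - a) * emeasure Q (A i)) =
        ennreal a * emeasure P (\<Union>i. A i) + ennreal (1 - a) * emeasure Q (\<Union>i. A i)"
      using A by (simp add: suminf_add[symmetric] suminf_emeasure)
  qed
qed

lemma prob_space_mixture_measure:
  assumes "prob_space P" "prob_space Q" and sets_Q: "sets Q = sets P" and a: "0 \<le> a" "a \<le> 1"
  shows "prob_space (mixture_measure a P Q)"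
proof
  interpret P: prob_space P by fact
  interpret Q: prob_space Q by fact
  have space_eq: "space (mixture_measure a P Q) = space P" "space Q = space P"
    using sets_eq_imp_space_eq[OF sets_mixture_measure] sets_eq_imp_space_eq[OF sets_Q] by simp_all
  have "emeasure (mixture_measure a P Q) (space P) = ennreal a + ennreal (1 - a)"
    using emeasure_mixture_measure[OF sets_Q sets.top[of P]] P.emeasure_space_1 Q.emeasure_space_1 space_eq(2)
    by simp
  also have "\<dots> = 1"
    using a by (simp flip: ennreal_plus)
  finally show "emeasure (mixture_measure a P Q) (space (mixture_measure a P Q)) = 1"
    unfolding space_eq .
qed

lemma null_sets_mixture_measure:
  assumes sets_Q: "sets Q = sets P" and A: "A \<in> null_sets (mixture_measure a P Q)"
  shows "ennreal a * emeasure P A = 0" "ennreal (1 - a) * emeasure Q A = 0"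
proof -
  have "A \<in> sets P"
    using null_setsD2[OF A] by simp
  then show "ennreal a * emeasure P A = 0" "ennreal (1 - a) * emeasure Q A = 0"
    using null_setsD1[OF A] emeasure_mixture_measure[OF sets_Q] by simp_all
qed

lemma absolutely_continuous_mixture_measure_left:
  assumes sets_Q: "sets Q = sets P" and "0 < a"
  shows "absolutely_continuous (mixture_measure a P Q) P"
  unfolding absolutely_continuous_def
proof
  fix A assume A: "A \<in> null_sets (mixture_measure a P Q)"
  then show "A \<in> null_sets P"
    using null_sets_mixture_measure(1)[OF sets_Q A] null_setsD2[OF A] \<open>0 < a\<close>
    by (intro null_setsI) simp_all
qed

lemma absolutely_continuous_mixture_measure_right:
  assumes sets_Q: "sets Q = sets P" and "a < 1"
  shows "absolutely_continuous (mixture_measure a P Q) Q"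
  unfolding absolutely_continuous_def
proof
  fix A assume A: "A \<in> null_sets (mixture_measure a P Q)"
  then show "A \<in> null_sets Q"
    using null_sets_mixture_measure(2)[OF sets_Q A] null_setsD2[OF A] sets_Q \<open>a < 1\<close>
    by (intro null_setsI) simp_all
qed

lemma JS_divergence_nonneg:
  assumes P: "prob_space P" and Q: "prob_space Q" and sets_Q: "sets Q = sets P"
  shows "0 \<le> JS_divergence P Q"
proof -
  have M: "prob_space (mixture_measure (1/2) P Q)"
    using prob_space_mixture_measure[OF P Q sets_Q] by simp
  have "0 \<le> KL_divergence (exp 1) (mixture_measure (1/2) P Q) P"
    using sets_Q by (intro KL_divergence_nonneg[OF M P] absolutely_continuous_mixture_measure_left) auto
  moreover have "0 \<le> KL_divergence (exp 1) (mixture_measure (1/2) P Q) Q"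
    using sets_Q by (intro KL_divergence_nonneg[OF M Q] absolutely_continuous_mixture_measure_right) auto
  ultimately show ?thesis
    unfolding JS_divergence_def Let_def by simp
qed

abbreviation projected_law :: "nat \<Rightarrow> (nat \<Rightarrow> real) \<Rightarrow> ((nat \<Rightarrow> real) \<Rightarrow> real) \<Rightarrow> real measure" where
  "projected_law d v p \<equiv> distr (law_Rd d p) lborel (inner_Rd d v)"

lemma sets_law_Rd: "sets (law_Rd d p) = sets (lebesgue_Rd d)"
  unfolding law_Rd_def by simp

lemma measurable_inner_Rd[measurable]: "inner_Rd d v \<in> borel_measurable (lebesgue_Rd d)"
  unfolding inner_Rd_def by measurable

lemma measurable_inner_Rd_law_Rd[measurable]: "inner_Rd d v \<in> borel_measurable (law_Rd d p)"
  by (simp add: measurable_cong_sets[OF sets_law_Rd refl])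

lemma prob_space_law_Rd:
  assumes p: "is_density_Rd d p" shows "prob_space (law_Rd d p)"
proof
  have [measurable]: "p \<in> borel_measurable (lebesgue_Rd d)"
    and "integrable (lebesgue_Rd d) p" "AE x in lebesgue_Rd d. 0 \<le> p x"
    and "(\<integral>x. p x \<partial>lebesgue_Rd d) = 1"
    using p unfolding is_density_Rd_def by auto
  then show "emeasure (law_Rd d p) (space (law_Rd d p)) = 1"
    unfolding law_Rd_def by (simp add: emeasure_density nn_integral_eq_integral)
qed

lemma prob_space_projected_law:
  assumes "is_density_Rd d p" shows "prob_space (projected_law d v p)"
  using prob_space_law_Rd[OF assms] by (rule prob_space.prob_space_distr) simp

lemma norm_Rd_eq_1_imp_nonzero:
  assumes "norm_Rd d v = 1" obtains j where "j < d" "v j \<noteq> 0"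
  using assms unfolding norm_Rd_def by (metis (no_types, lifting) power_zero_numeral real_sqrt_zero sum.neutral lessThan_iff zero_neq_one)

lemma inner_Rd_fun_upd:
  assumes "j < d"
  shows "inner_Rd d v (x(j := y)) = v j * y + (\<Sum>i\<in>{..<d} - {j}. v i * x i)"
proof -
  have "inner_Rd d v (x(j := y)) = v j * y + (\<Sum>i\<in>{..<d} - {j}. v i * (x(j := y)) i)"
    unfolding inner_Rd_def using assms by (subst sum.remove[where x=j]) auto
  also have "(\<Sum>i\<in>{..<d} - {j}. v i * (x(j := y)) i) = (\<Sum>i\<in>{..<d} - {j}. v i * x i)"
    by (intro sum.cong) auto
  finally show ?thesis .
qed

lemma null_sets_inner_Rd_vimage:
  assumes j: "j < d" "v j \<noteq> 0" and N: "N \<in> null_sets lborel"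
  shows "inner_Rd d v -` N \<inter> space (lebesgue_Rd d) \<in> null_sets (lebesgue_Rd d)"
proof -
  interpret product_sigma_finite "\<lambda>_::nat. lborel::real measure" by standard
  define I where "I = {..<d} - {j}"
  have insert_I: "{..<d} = insert j I" "finite I" "j \<notin> I"
    using j unfolding I_def by auto
  define A where "A = inner_Rd d v -` N \<inter> space (lebesgue_Rd d)"
  have [measurable]: "N \<in> sets borel" using N by auto
  have A_sets: "A \<in> sets (Pi\<^sub>M (insert j I) (\<lambda>_. lborel))"
    unfolding A_def insert_I(1)[symmetric] by measurable
  \<comment> \<open>Tonelli along coordinate j: every line parallel to e_j meets the preimage in an affine image of N\<close>
  have line_null: "(\<integral>\<^sup>+y. indicator N (c + v j * y) \<partial>lborel) = (0::ennreal)" for c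
    using nn_integral_real_affine[of "indicator N" "v j" c] N j by (simp add: null_sets_def)
  have "emeasure (Pi\<^sub>M (insert j I) (\<lambda>_. lborel)) A =
      (\<integral>\<^sup>+x. (\<integral>\<^sup>+y. indicator A (x(j := y)) \<partial>lborel) \<partial>Pi\<^sub>M I (\<lambda>_. lborel))"
    using A_sets insert_I by (simp add: product_nn_integral_insert[symmetric])
  also have "\<dots> = (\<integral>\<^sup>+x. 0 \<partial>Pi\<^sub>M I (\<lambda>_. lborel :: real measure))"
  proof (rule nn_integral_cong)
    fix x assume x: "x \<in> space (Pi\<^sub>M I (\<lambda>_. lborel :: real measure))"
    then have "x(j := y) \<in> space (lebesgue_Rd d)" for y
      using insert_I by (auto simp: space_PiM PiE_def extensional_def)
    then have "indicator A (x(j := y)) = (indicator N ((\<Sum>i\<in>I. v i * x i) + v j * y) :: ennreal)" for y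
      unfolding A_def I_def using j by (simp add: inner_Rd_fun_upd indicator_def add.commute)
    then show "(\<integral>\<^sup>+y. indicator A (x(j := y)) \<partial>lborel) = 0"
      by (simp add: line_null)
  qed
  finally show ?thesis
    using A_sets unfolding A_def insert_I(1)[symmetric] by (simp add: null_sets_def)
qed

lemma absolutely_continuous_projected_law:
  assumes p: "is_density_Rd d p" and v: "norm_Rd d v = 1"
  shows "absolutely_continuous lborel (projected_law d v p)"
  unfolding absolutely_continuous_def
proof
  fix N :: "real set" assume N: "N \<in> null_sets lborel"
  obtain j where "j < d" "v j \<noteq> 0" using norm_Rd_eq_1_imp_nonzero[OF v] .
  then have "inner_Rd d v -` N \<inter> space (lebesgue_Rd d) \<in> null_sets (lebesgue_Rd d)"
    using N by (rule null_sets_inner_Rd_vimage)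
  moreover have "null_sets (lebesgue_Rd d) \<subseteq> null_sets (law_Rd d p)"
    using p absolutely_continuousI_density[of p "lebesgue_Rd d"]
    unfolding is_density_Rd_def law_Rd_def absolutely_continuous_def by auto
  ultimately show "N \<in> null_sets (projected_law d v p)"
    using N by (auto simp: null_sets_distr_iff law_Rd_def)
qed

lemma
  assumes p: "is_density_Rd d p" and [measurable]: "h \<in> borel_measurable borel"
  shows integrable_projected_law_iff: "integrable (projected_law d v p) h \<longleftrightarrow>
      integrable (lebesgue_Rd d) (\<lambda>x. p x * h (inner_Rd d v x))"
    and integral_projected_law: "integral\<^sup>L (projected_law d v p) h =
      (\<integral>x. p x * h (inner_Rd d v x) \<partial>lebesgue_Rd d)"
proof -
  have [measurable]: "p \<in> borel_measurable (lebesgue_Rd d)"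
    and p_nonneg: "AE x in lebesgue_Rd d. 0 \<le> p x"
    using p unfolding is_density_Rd_def by auto
  show "integrable (projected_law d v p) h \<longleftrightarrow> integrable (lebesgue_Rd d) (\<lambda>x. p x * h (inner_Rd d v x))"
    using p_nonneg by (simp add: integrable_distr_eq law_Rd_def integrable_density)
  show "integral\<^sup>L (projected_law d v p) h = (\<integral>x. p x * h (inner_Rd d v x) \<partial>lebesgue_Rd d)"
    using p_nonneg by (simp add: integral_distr law_Rd_def integral_density)
qed

lemma is_density_Rd_mixture:
  assumes "is_density_Rd d p1" "is_density_Rd d p2" "0 \<le> a" "a \<le> 1"
  shows "is_density_Rd d (\<lambda>x. a * p1 x + (1 - a) * p2 x)"
proof -
  have [measurable]: "p1 \<in> borel_measurable (lebesgue_Rd d)" "p2 \<in> borel_measurable (lebesgue_Rd d)"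
    using assms unfolding is_density_Rd_def by auto
  show ?thesis using assms unfolding is_density_Rd_def by simp
qed

lemma
  assumes p1: "is_density_Rd d p1" and p2: "is_density_Rd d p2" and a: "0 \<le> a" "a \<le> 1"
    and h[measurable]: "h \<in> borel_measurable borel"
    and int1: "integrable (projected_law d v p1) h" and int2: "integrable (projected_law d v p2) h"
  shows integrable_projected_law_mixture:
      "integrable (projected_law d v (\<lambda>x. a * p1 x + (1 - a) * p2 x)) h"
    and integral_projected_law_mixture:
      "integral\<^sup>L (projected_law d v (\<lambda>x. a * p1 x + (1 - a) * p2 x)) h =
        a * integral\<^sup>L (projected_law d v p1) h + (1 - a) * integral\<^sup>L (projected_law d v p2) h"
proof -
  note mixture = is_density_Rd_mixture[OF p1 p2 a]
  have distrib: "(a * p1 x + (1 - a) * p2 x) * h (inner_Rd d v x) =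
      a * (p1 x * h (inner_Rd d v x)) + (1 - a) * (p2 x * h (inner_Rd d v x))" for x
    by (simp add: algebra_simps)
  have "integrable (lebesgue_Rd d) (\<lambda>x. p1 x * h (inner_Rd d v x))"
    and "integrable (lebesgue_Rd d) (\<lambda>x. p2 x * h (inner_Rd d v x))"
    using int1 int2 by (simp_all add: integrable_projected_law_iff[OF p1] integrable_projected_law_iff[OF p2])
  then show "integrable (projected_law d v (\<lambda>x. a * p1 x + (1 - a) * p2 x)) h"
    and "integral\<^sup>L (projected_law d v (\<lambda>x. a * p1 x + (1 - a) * p2 x)) h =
      a * integral\<^sup>L (projected_law d v p1) h + (1 - a) * integral\<^sup>L (projected_law d v p2) h"
    by (simp_all add: integrable_projected_law_iff[OF mixture] integral_projected_law[OF mixture]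
        integral_projected_law[OF p1] integral_projected_law[OF p2] distrib)
qed

lemma power2_le_exp_plus_exp_minus: "(t::real)\<^sup>2 \<le> 2 * (exp t + exp (- t))"
proof -
  have "s\<^sup>2 \<le> 2 * exp s" if "0 \<le> s" for s :: real
    using exp_lower_Taylor_quadratic[OF that] that by simp
  from this[of t] this[of "- t"] show ?thesis
    by (cases "0 \<le> t") (simp_all add: add_increasing add_increasing2)
qed

lemma subgaussian_Rd_second_moment:
  assumes sg: "subgaussian_Rd d \<sigma> P" and sets_P: "sets P = sets (lebesgue_Rd d)"
    and \<sigma>: "\<sigma> > 0" and v: "norm_Rd d v = 1"
  defines "\<mu> \<equiv> \<integral>x. inner_Rd d v x \<partial>P"
  shows "integrable (distr P lborel (inner_Rd d v)) (\<lambda>y. (y - \<mu>)\<^sup>2)"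
    and "(\<integral>y. (y - \<mu>)\<^sup>2 \<partial>distr P lborel (inner_Rd d v)) \<le> 4 * exp (1/2) * \<sigma>\<^sup>2"
proof -
  have [measurable]: "inner_Rd d v \<in> borel_measurable P"
    by (simp add: measurable_cong_sets[OF sets_P refl])
  define E where "E l x = exp (l * (inner_Rd d v x - \<mu>))" for l x
  have mgf: "integrable P (E l) \<and> (\<integral>x. E l x \<partial>P) \<le> exp (l\<^sup>2 * \<sigma>\<^sup>2 / 2)" for l
    using sg v unfolding subgaussian_Rd_def \<mu>_def E_def by blast
  have E_bound: "integrable P (E l)" "(\<integral>x. E l x \<partial>P) \<le> exp (1/2)" if "l = 1/\<sigma> \<or> l = -1/\<sigma>" for l
    using mgf[of l] that \<sigma> by (auto simp: power2_eq_square)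
  let ?B = "\<lambda>x. 2 * \<sigma>\<^sup>2 * (E (1/\<sigma>) x + E (-1/\<sigma>) x)"
  have pointwise: "(inner_Rd d v x - \<mu>)\<^sup>2 \<le> ?B x" for x
    using power2_le_exp_plus_exp_minus[of "(inner_Rd d v x - \<mu>) / \<sigma>"] \<sigma>
    by (simp add: E_def field_simps)
  have int_B: "integrable P ?B" using E_bound by simp
  have int_sq: "integrable P (\<lambda>x. (inner_Rd d v x - \<mu>)\<^sup>2)"
    using pointwise by (intro Bochner_Integration.integrable_bound[OF int_B]) (auto simp: E_def)
  have "(\<integral>x. (inner_Rd d v x - \<mu>)\<^sup>2 \<partial>P) \<le> (\<integral>x. ?B x \<partial>P)"
    by (rule integral_mono[OF int_sq int_B pointwise])
  also have "\<dots> = 2 * \<sigma>\<^sup>2 * ((\<integral>x. E (1/\<sigma>) x \<partial>P) + (\<integral>x. E (-1/\<sigma>) x \<partial>P))"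
    using E_bound by simp
  also have "\<dots> \<le> 2 * \<sigma>\<^sup>2 * (exp (1/2) + exp (1/2))"
    using E_bound by (intro mult_left_mono add_mono) auto
  finally show "(\<integral>y. (y - \<mu>)\<^sup>2 \<partial>distr P lborel (inner_Rd d v)) \<le> 4 * exp (1/2) * \<sigma>\<^sup>2"
    by (simp add: integral_distr mult_ac)
  show "integrable (distr P lborel (inner_Rd d v)) (\<lambda>y. (y - \<mu>)\<^sup>2)"
    using int_sq by (simp add: integrable_distr_eq)
qed

lemma ln_normal_density:
  assumes "\<sigma> > 0"
  shows "ln (normal_density \<mu> \<sigma> x) = - (ln (2 * pi) / 2 + ln \<sigma>) - (x - \<mu>)\<^sup>2 / (2 * \<sigma>\<^sup>2)"
  using assms by (simp add: normal_density_def ln_div ln_mult ln_sqrt real_sqrt_mult add_divide_distrib)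

lemma ln_normal_density_mixture_bounds:
  fixes m m' \<sigma> y :: real
  assumes \<sigma>: "\<sigma> > 0"
  defines "g \<equiv> (normal_density m \<sigma> y + normal_density m' \<sigma> y) / 2"
  shows "- ln 2 - (ln (2 * pi) / 2 + ln \<sigma>) - (y - m)\<^sup>2 / (2 * \<sigma>\<^sup>2) \<le> ln g"
    and "ln g \<le> - (ln (2 * pi) / 2 + ln \<sigma>)"
proof -
  let ?K = "ln (2 * pi) / 2 + ln \<sigma>"
  have pos: "0 < normal_density \<mu> \<sigma> y" for \<mu>
    using normal_density_pos[OF \<sigma>] .
  have le: "normal_density \<mu> \<sigma> y \<le> exp (- ?K)" for \<mu>
  proof -
    have "normal_density \<mu> \<sigma> y = exp (ln (normal_density \<mu> \<sigma> y))"
      using pos[of \<mu>] by simp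
    also have "\<dots> = exp (- ?K - (y - \<mu>)\<^sup>2 / (2 * \<sigma>\<^sup>2))"
      by (simp only: ln_normal_density[OF \<sigma>])
    also have "\<dots> \<le> exp (- ?K)"
      using \<sigma> by simp
    finally show ?thesis .
  qed
  have "ln (normal_density m \<sigma> y / 2) \<le> ln g"
    unfolding g_def using pos[of m] pos[of m'] by simp
  then show "- ln 2 - ?K - (y - m)\<^sup>2 / (2 * \<sigma>\<^sup>2) \<le> ln g"
    using pos[of m] by (simp add: ln_div ln_normal_density[OF \<sigma>])
  have "ln g \<le> ln (exp (- ?K))"
    unfolding g_def using le[of m] le[of m'] pos[of m] pos[of m'] by (intro ln_mono) simp_all
  then show "ln g \<le> - ?K"
    by simp
qed

lemma
  fixes R :: "real measure" and m m' \<sigma> V :: real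
  assumes "prob_space R" and sets_R: "sets R = sets borel" and \<sigma>: "\<sigma> > 0"
    and int_sq: "integrable R (\<lambda>y. (y - m)\<^sup>2)" and sq_le: "(\<integral>y. (y - m)\<^sup>2 \<partial>R) \<le> V"
  shows integrable_ln_normal_mixture:
      "integrable R (\<lambda>y. ln ((normal_density m \<sigma> y + normal_density m' \<sigma> y) / 2))"
    and integral_ln_normal_mixture_ge:
      "- ln 2 - (ln (2 * pi) / 2 + ln \<sigma>) - V / (2 * \<sigma>\<^sup>2) \<le>
        (\<integral>y. ln ((normal_density m \<sigma> y + normal_density m' \<sigma> y) / 2) \<partial>R)"
proof -
  interpret prob_space R by fact
  let ?K = "ln (2 * pi) / 2 + ln \<sigma>"
  let ?ln_g = "\<lambda>y. ln ((normal_density m \<sigma> y + normal_density m' \<sigma> y) / 2)"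
  let ?L = "\<lambda>y. - ln 2 - ?K - (y - m)\<^sup>2 / (2 * \<sigma>\<^sup>2)"
  note bounds = ln_normal_density_mixture_bounds[OF \<sigma>, where m=m and m'=m']
  have [measurable]: "?ln_g \<in> borel_measurable R"
    by (simp add: measurable_cong_sets[OF sets_R refl])
  have int_L: "integrable R ?L"
    using int_sq by simp
  have abs_le: "\<bar>x\<bar> \<le> \<bar>a\<bar> + \<bar>c\<bar>" if "a \<le> x" "x \<le> - c" for a x c :: real
    using that by linarith
  show int_ln_g: "integrable R ?ln_g"
  proof (rule Bochner_Integration.integrable_bound)
    show "integrable R (\<lambda>y. \<bar>?L y\<bar> + \<bar>?K\<bar>)"
      using int_L by simp
    show "AE y in R. norm (?ln_g y) \<le> norm (\<bar>?L y\<bar> + \<bar>?K\<bar>)"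
      using abs_le[OF bounds] by (intro AE_I2) simp
  qed simp
  have "- ln 2 - ?K - V / (2 * \<sigma>\<^sup>2) \<le> - ln 2 - ?K - (\<integral>y. (y - m)\<^sup>2 \<partial>R) / (2 * \<sigma>\<^sup>2)"
    using sq_le \<sigma> by (simp add: divide_right_mono)
  also have "\<dots> = (\<integral>y. ?L y \<partial>R)"
    using int_sq by (simp add: prob_space)
  also have "\<dots> \<le> (\<integral>y. ?ln_g y \<partial>R)"
    by (rule integral_mono[OF int_L int_ln_g bounds(1)])
  finally show "- ln 2 - ?K - V / (2 * \<sigma>\<^sup>2) \<le> (\<integral>y. ?ln_g y \<partial>R)" .
qed

lemma diff_entropy_le_cross_entropy:
  fixes X :: "'a \<Rightarrow> real"
  assumes P: "prob_space P" and [measurable]: "X \<in> borel_measurable P"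
    and ac: "absolutely_continuous lborel (distr P lborel X)"
    and [measurable]: "g \<in> borel_measurable borel" and g_pos: "\<And>y. 0 < g y"
    and g_subprob: "(\<integral>\<^sup>+y. ennreal (g y) \<partial>lborel) \<le> 1"
    and int_ln_g: "integrable (distr P lborel X) (\<lambda>y. ln (g y))"
    and int_entropy_density:
      "integrable (distr P lborel X) (entropy_density (exp 1) lborel (distr P lborel X))"
  shows "diff_entropy P X \<le> - (\<integral>y. ln (g y) \<partial>distr P lborel X)"
proof -
  have "(\<integral>y. ln (g y) \<partial>distr P lborel X) \<le> KL_divergence (exp 1) lborel (distr P lborel X)"
    using P by (intro integral_ln_le_KL_divergence[OF lborel.sigma_finite_measure_axioms _ ac]
        g_pos g_subprob int_ln_g int_entropy_density prob_space.prob_space_distr) auto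
  then show ?thesis
    unfolding diff_entropy_def prob_space.entropy_def[OF P] by simp
qed

lemma nn_integral_normal_mixture:
  assumes "\<sigma> > 0"
  shows "(\<integral>\<^sup>+y. ennreal ((normal_density m \<sigma> y + normal_density m' \<sigma> y) / 2) \<partial>lborel) = 1"
proof -
  have "integrable lborel (\<lambda>y. (normal_density m \<sigma> y + normal_density m' \<sigma> y) / 2)"
    using assms by auto
  then have "(\<integral>\<^sup>+y. ennreal ((normal_density m \<sigma> y + normal_density m' \<sigma> y) / 2) \<partial>lborel) =
      ennreal (\<integral>y. (normal_density m \<sigma> y + normal_density m' \<sigma> y) / 2 \<partial>lborel)"
    by (intro nn_integral_eq_integral) auto
  also have "(\<integral>y. (normal_density m \<sigma> y + normal_density m' \<sigma> y) / 2 \<partial>lborel) = 1"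
    using assms by simp
  finally show ?thesis
    by simp
qed

lemma
  assumes \<sigma>: "\<sigma> > 0" and p: "is_density_Rd d p" and sg: "subgaussian_Rd d \<sigma> (law_Rd d p)"
    and v: "norm_Rd d v = 1"
  defines "m \<equiv> \<integral>x. inner_Rd d v x \<partial>law_Rd d p"
  shows integrable_ln_normal_mixture_projected_law:
      "integrable (projected_law d v p) (\<lambda>y. ln ((normal_density m \<sigma> y + normal_density m' \<sigma> y) / 2))"
    and integral_ln_normal_mixture_projected_law_ge:
      "- ln 2 - (ln (2 * pi) / 2 + ln \<sigma>) - 2 * exp (1/2) \<le>
        (\<integral>y. ln ((normal_density m \<sigma> y + normal_density m' \<sigma> y) / 2) \<partial>projected_law d v p)"
proof -
  note moment = subgaussian_Rd_second_moment[OF sg sets_law_Rd \<sigma> v, folded m_def]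
  show "integrable (projected_law d v p) (\<lambda>y. ln ((normal_density m \<sigma> y + normal_density m' \<sigma> y) / 2))"
    by (rule integrable_ln_normal_mixture[OF prob_space_projected_law[OF p] _ \<sigma> moment]) simp
  have "4 * exp (1/2) * \<sigma>\<^sup>2 / (2 * \<sigma>\<^sup>2) = 2 * exp (1/2)"
    using \<sigma> by simp
  then show "- ln 2 - (ln (2 * pi) / 2 + ln \<sigma>) - 2 * exp (1/2) \<le>
      (\<integral>y. ln ((normal_density m \<sigma> y + normal_density m' \<sigma> y) / 2) \<partial>projected_law d v p)"
    using integral_ln_normal_mixture_ge[OF prob_space_projected_law[OF p] _ \<sigma> moment, of m'] by simp
qed

lemma diff_entropy_projected_mixture_le:
  assumes \<sigma>: "\<sigma> > 0" and \<alpha>: "0 \<le> \<alpha>" "\<alpha> \<le> 1"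
    and p1: "is_density_Rd d p1" and p2: "is_density_Rd d p2"
    and sg1: "subgaussian_Rd d \<sigma> (law_Rd d p1)" and sg2: "subgaussian_Rd d \<sigma> (law_Rd d p2)"
    and v: "norm_Rd d v = 1"
  defines "p \<equiv> \<lambda>x. \<alpha> * p1 x + (1 - \<alpha>) * p2 x"
  assumes int_entropy_density:
    "integrable (projected_law d v p) (entropy_density (exp 1) lborel (projected_law d v p))"
  shows "diff_entropy (law_Rd d p) (inner_Rd d v) \<le> ln 2 + ln (2 * pi) / 2 + ln \<sigma> + 2 * exp (1/2)"
proof -
  have p: "is_density_Rd d p"
    unfolding p_def using p1 p2 \<alpha> by (rule is_density_Rd_mixture)
  define m1 where "m1 = (\<integral>x. inner_Rd d v x \<partial>law_Rd d p1)"
  define m2 where "m2 = (\<integral>x. inner_Rd d v x \<partial>law_Rd d p2)"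
  define g where "g y = (normal_density m1 \<sigma> y + normal_density m2 \<sigma> y) / 2" for y
  let ?B = "- ln 2 - (ln (2 * pi) / 2 + ln \<sigma>) - 2 * exp (1/2)"
  have g_measurable[measurable]: "g \<in> borel_measurable borel"
    unfolding g_def by measurable
  have g_pos: "0 < g y" for y
    unfolding g_def using normal_density_pos[OF \<sigma>] by (simp add: add_pos_pos)
  have g_subprob: "(\<integral>\<^sup>+y. ennreal (g y) \<partial>lborel) \<le> 1"
    unfolding g_def using nn_integral_normal_mixture[OF \<sigma>] by simp
  have int1: "integrable (projected_law d v p1) (\<lambda>y. ln (g y))"
    and cross1: "?B \<le> (\<integral>y. ln (g y) \<partial>projected_law d v p1)"
    using integrable_ln_normal_mixture_projected_law[OF \<sigma> p1 sg1 v, of m2]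
      integral_ln_normal_mixture_projected_law_ge[OF \<sigma> p1 sg1 v, of m2]
    unfolding g_def m1_def by simp_all
  have int2: "integrable (projected_law d v p2) (\<lambda>y. ln (g y))"
    and cross2: "?B \<le> (\<integral>y. ln (g y) \<partial>projected_law d v p2)"
    using integrable_ln_normal_mixture_projected_law[OF \<sigma> p2 sg2 v, of m1]
      integral_ln_normal_mixture_projected_law_ge[OF \<sigma> p2 sg2 v, of m1]
    unfolding g_def m2_def by (simp_all add: add.commute)
  have int: "integrable (projected_law d v p) (\<lambda>y. ln (g y))"
    unfolding p_def by (rule integrable_projected_law_mixture[OF p1 p2 \<alpha> _ int1 int2]) measurable
  have "?B = \<alpha> * ?B + (1 - \<alpha>) * ?B"
    by (simp only: distrib_right[symmetric]) simp
  also have "\<dots> \<le> \<alpha> * (\<integral>y. ln (g y) \<partial>projected_law d v p1) + (1 - \<alpha>) * (\<integral>y. ln (g y) \<partial>projected_law d v p2)"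
    using \<alpha> cross1 cross2 by (intro add_mono mult_left_mono) auto
  also have "\<dots> = (\<integral>y. ln (g y) \<partial>projected_law d v p)"
    unfolding p_def by (rule integral_projected_law_mixture[OF p1 p2 \<alpha> _ int1 int2, symmetric]) measurable
  finally have "?B \<le> (\<integral>y. ln (g y) \<partial>projected_law d v p)" .
  moreover have "diff_entropy (law_Rd d p) (inner_Rd d v) \<le> - (\<integral>y. ln (g y) \<partial>projected_law d v p)"
    by (rule diff_entropy_le_cross_entropy[OF prob_space_law_Rd[OF p] measurable_inner_Rd_law_Rd
          absolutely_continuous_projected_law[OF p v] g_measurable g_pos g_subprob int int_entropy_density])
  ultimately show ?thesis
    by linarith
qed

theorem mainTheorem5:
  "\<exists>C K::real. C > 0 \<and>
     (\<forall>(d::nat) (\<sigma>::real) (\<alpha>::real) (\<beta>::real) p1 p2 v.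
        d \<ge> 1 \<longrightarrow> \<sigma> > 0 \<longrightarrow> 0 \<le> \<alpha> \<longrightarrow> \<alpha> \<le> 1 \<longrightarrow>
        is_density_Rd d p1 \<longrightarrow> is_density_Rd d p2 \<longrightarrow>
        subgaussian_Rd d \<sigma> (law_Rd d p1) \<longrightarrow> subgaussian_Rd d \<sigma> (law_Rd d p2) \<longrightarrow>
        emeasure (lebesgue_Rd d)
          {x \<in> space (lebesgue_Rd d). p1 x > 0 \<and> p2 x > 0} > 0 \<longrightarrow>
        norm_Rd d v = 1 \<longrightarrow>
        JS_divergence (distr (law_Rd d p1) lborel (inner_Rd d v))
                      (distr (law_Rd d p2) lborel (inner_Rd d v)) \<le> \<beta> \<longrightarrow>
        (let p = (\<lambda>x. \<alpha> * p1 x + (1 - \<alpha>) * p2 x);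
             Q = distr (law_Rd d p) lborel (inner_Rd d v) in
         integrable Q (entropy_density (exp 1) lborel Q) \<longrightarrow>
         diff_entropy (law_Rd d p) (inner_Rd d v) \<le> C * (ln \<sigma> + \<beta>) + K))"
proof -
  define K :: real where "K = ln 2 + ln (2 * pi) / 2 + 2 * exp (1/2)"
  have bound: "diff_entropy (law_Rd d (\<lambda>x. \<alpha> * p1 x + (1 - \<alpha>) * p2 x)) (inner_Rd d v)
      \<le> 1 * (ln \<sigma> + \<beta>) + K"
    if "\<sigma> > 0" "0 \<le> \<alpha>" "\<alpha> \<le> 1" "is_density_Rd d p1" "is_density_Rd d p2"
      "subgaussian_Rd d \<sigma> (law_Rd d p1)" "subgaussian_Rd d \<sigma> (law_Rd d p2)" "norm_Rd d v = 1"
      "JS_divergence (projected_law d v p1) (projected_law d v p2) \<le> \<beta>"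
      "integrable (projected_law d v (\<lambda>x. \<alpha> * p1 x + (1 - \<alpha>) * p2 x))
         (entropy_density (exp 1) lborel (projected_law d v (\<lambda>x. \<alpha> * p1 x + (1 - \<alpha>) * p2 x)))"
    for d \<sigma> \<alpha> \<beta> p1 p2 v
  proof -
    have "0 \<le> JS_divergence (projected_law d v p1) (projected_law d v p2)"
      using that by (intro JS_divergence_nonneg prob_space_projected_law) auto
    then show ?thesis
      using diff_entropy_projected_mixture_le[OF that(1-8,10)] that(9) by (simp add: K_def)
  qed
  show ?thesis
    unfolding Let_def
  proof (rule exI[of _ 1], rule exI[of _ K], intro conjI allI impI)
    show "(0::real) < 1" by simp
  qed (rule bound; assumption)
qed

end
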